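(* Consider a radiation source on the linear trajectory $x(t)=x_o^*+s^*(t-t_o)\sin\theta^*$, $y(t)=y_o^*+s^*(t-t_o)\cos\theta^*$ with $s^*>0$ and known $t_o$, and $n$ sensors at locations $(x_j,y_j)$, $j=1,\dots,n$, which are i.i.d. with zero-mean coordinates (with finite second moments and non-singular covariance). Let $t_j^*=t_o+\frac{\sin\theta^*}{s^*}(x_j-x_o^* )+\frac{\cos\theta^*}{s^*}(y_j-y_o^* )$ be the true time of shortest approach to sensor $j$, and let the recorded times $t_j$ be, conditionally on the sensor locations, independent with $t_j-t_o\sim\mathrm{Erlang}\!\left(2\lambda_T,\frac{2\lambda_T}{t_j^*-t_o}\right)$ (shape $2\lambda_T$, rate $2\lambda_T/(t_j^*-t_o)$, so that $\mathbb{E}[t_j-t_o]=t_j^*-t_o$), where $\lambda_T$ is a positive integer and $t_j^*>t_o$. Let $\mathbb{A}_1\in\mathbb{R}^{n\times 3}$ have $j$-th row $(x_j,\,y_j,\,1)$, let $\mathbb{Y}_1\in\mathbb{R}^n$ have $j$-th entry $t_j-t_o$, let $\mathbb{X}_1=(\mathbb{A}_1^T\mathbb{A}_1)^{-1}\mathbb{A}_1^T\mathbb{Y}_1$, and let $$\mathbb{X}_1^*=\left(\frac{\sin\theta^*}{s^*},\ \frac{\cos\theta^*}{s^*},\ -\frac{1}{s^*}\big(x_o^*\sin\theta^*+y_o^*\cos\theta^*\big)\right)^T.$$ Then $\mathbb{X}_1^*-\mathbb{X}_1\to(0,0,0)^T$ (in probability) as $n\to\infty$.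
   Context: $\mathrm{Erlang}(k,r)$ denotes the Gamma distribution with integer shape $k$ and rate $r$. The recorded time $t_j$ models the midpoint of the (noisy) entry and exit times of the source into and out of the sensing range of sensor $j$; in the noise-free case $t_j=t_j^*$ and $\mathbb{A}_1\mathbb{X}_1^*$ equals the vector with entries $t_j^*-t_o$. *)

theory Defs
  imports "HOL-Probability.Probability"
begin

definition A1_row :: "(nat \<Rightarrow> real) \<Rightarrow> (nat \<Rightarrow> real) \<Rightarrow> nat \<Rightarrow> real^3" where
  "A1_row xs ys j = vector [xs j, ys j, 1]"

definition A1TA1 :: "(nat \<Rightarrow> real) \<Rightarrow> (nat \<Rightarrow> real) \<Rightarrow> nat \<Rightarrow> real^3^3" where
  "A1TA1 xs ys n = (\<chi> i k. \<Sum>j<n. A1_row xs ys j $ i * A1_row xs ys j $ k)"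

definition A1TY1 :: "(nat \<Rightarrow> real) \<Rightarrow> (nat \<Rightarrow> real) \<Rightarrow> (nat \<Rightarrow> real) \<Rightarrow> nat \<Rightarrow> real^3" where
  "A1TY1 xs ys Ys n = (\<chi> i. \<Sum>j<n. A1_row xs ys j $ i * Ys j)"

definition LS_X1 :: "(nat \<Rightarrow> real) \<Rightarrow> (nat \<Rightarrow> real) \<Rightarrow> (nat \<Rightarrow> real) \<Rightarrow> nat \<Rightarrow> real^3" where
  "LS_X1 xs ys Ys n = matrix_inv (A1TA1 xs ys n) *v A1TY1 xs ys Ys n"

definition t_star :: "real \<Rightarrow> real \<Rightarrow> real \<Rightarrow> real \<Rightarrow> real \<Rightarrow> real \<Rightarrow> real \<Rightarrow> real" where
  "t_star t_o s \<theta> xo yo x y = t_o + sin \<theta> / s * (x - xo) + cos \<theta> / s * (y - yo)"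

definition X1_star :: "real \<Rightarrow> real \<Rightarrow> real \<Rightarrow> real \<Rightarrow> real^3" where
  "X1_star s \<theta> xo yo = vector [sin \<theta> / s, cos \<theta> / s, - (1 / s) * (xo * sin \<theta> + yo * cos \<theta>)]"

definition covar :: "'a measure \<Rightarrow> ('a \<Rightarrow> real) \<Rightarrow> ('a \<Rightarrow> real) \<Rightarrow> real" where
  "covar M U V = (\<integral>\<omega>. (U \<omega> - (\<integral>\<omega>'. U \<omega>' \<partial>M)) * (V \<omega> - (\<integral>\<omega>'. V \<omega>' \<partial>M)) \<partial>M)"

definition tendsto_in_prob :: "'a measure \<Rightarrow> (nat \<Rightarrow> 'a \<Rightarrow> 'b::real_normed_vector) \<Rightarrow> 'b \<Rightarrow> bool" where
  "tendsto_in_prob M Z c \<longleftrightarrow>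
     (\<forall>\<epsilon>>0. (\<lambda>n. measure M {\<omega> \<in> space M. norm (Z n \<omega> - c) > \<epsilon>}) \<longlonglongrightarrow> 0)"

end

theory Submission
  imports Defs
begin

text \<open>
  The estimator is \<open>X\<^sub>1 = (A\<^sub>1\<^sup>T A\<^sub>1 / n)\<^sup>-\<^sup>1 (A\<^sub>1\<^sup>T Y\<^sub>1 / n)\<close>. By the weak law of large numbers
  (proved by truncation and Chebyshev's inequality), \<open>A\<^sub>1\<^sup>T A\<^sub>1 / n\<close> tends in probability to the
  Gram matrix \<open>G = E[\<phi> \<phi>\<^sup>T]\<close> of the regressors \<open>\<phi> = (x, y, 1)\<close>, which is invertible because the
  locations are centred with non-singular covariance. Given the location, \<open>T - t\<^sub>o\<close> is Erlang with
  mean \<open>t\<^sup>* - t\<^sub>o = \<phi>\<^sup>T X\<^sub>1\<^sup>*\<close>, so \<open>A\<^sub>1\<^sup>T Y\<^sub>1 / n\<close> tends to \<open>E[\<phi> (t\<^sup>* - t\<^sub>o)] = G X\<^sub>1\<^sup>*\<close>.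
  Since solving a linear system with a matrix bounded below is stable under small perturbations,
  \<open>X\<^sub>1\<close> tends to \<open>G\<^sup>-\<^sup>1 G X\<^sub>1\<^sup>* = X\<^sub>1\<^sup>*\<close>.
\<close>

section \<open>Weak law of large numbers\<close>

definition truncate_at :: "real \<Rightarrow> real \<Rightarrow> real" where
  "truncate_at K z = (if \<bar>z\<bar> \<le> K then z else 0)"

lemma truncate_at_measurable[measurable]: "truncate_at K \<in> borel_measurable borel"
  unfolding truncate_at_def by measurable

lemma abs_truncate_at_le: "0 \<le> K \<Longrightarrow> \<bar>truncate_at K z\<bar> \<le> K"
  by (simp add: truncate_at_def)

lemma (in prob_space) tendsto_expectation_truncation_error:
  fixes Z :: "'a \<Rightarrow> real"
  assumes int: "integrable M Z"
  shows "(\<lambda>m::nat. expectation (\<lambda>\<omega>. \<bar>Z \<omega> - truncate_at (real m) (Z \<omega>)\<bar>)) \<longlonglongrightarrow> 0"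
proof -
  have [measurable]: "Z \<in> borel_measurable M" using int by auto
  have "(\<lambda>m::nat. expectation (\<lambda>\<omega>. \<bar>Z \<omega> - truncate_at (real m) (Z \<omega>)\<bar>))
      \<longlonglongrightarrow> expectation (\<lambda>\<omega>. 0::real)"
  proof (rule integral_dominated_convergence[where w="\<lambda>\<omega>. \<bar>Z \<omega>\<bar>"])
    show "AE \<omega> in M. (\<lambda>m::nat. \<bar>Z \<omega> - truncate_at (real m) (Z \<omega>)\<bar>) \<longlonglongrightarrow> 0"
    proof (rule AE_I2)
      fix \<omega>
      obtain N :: nat where N: "\<bar>Z \<omega>\<bar> \<le> real N" using real_arch_simple by blast
      have "\<forall>\<^sub>F m in sequentially. \<bar>Z \<omega> - truncate_at (real m) (Z \<omega>)\<bar> = 0"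
        using eventually_ge_at_top[of N] by eventually_elim (use N in \<open>auto simp: truncate_at_def\<close>)
      then show "(\<lambda>m::nat. \<bar>Z \<omega> - truncate_at (real m) (Z \<omega>)\<bar>) \<longlonglongrightarrow> 0"
        by (rule tendsto_eventually)
    qed
  qed (use int in \<open>auto simp: truncate_at_def\<close>)
  then show ?thesis by simp
qed

lemma integral_comp_eq_if_distr_eq:
  fixes h :: "'b \<Rightarrow> real"
  assumes "distr M N X = distr M N Y" "X \<in> M \<rightarrow>\<^sub>M N" "Y \<in> M \<rightarrow>\<^sub>M N" "h \<in> borel_measurable N"
  shows "(\<integral>\<omega>. h (X \<omega>) \<partial>M) = (\<integral>\<omega>. h (Y \<omega>) \<partial>M)"
  using assms by (metis integral_distr)

lemma integrable_comp_iff_if_distr_eq: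
  fixes h :: "'b \<Rightarrow> real"
  assumes "distr M N X = distr M N Y" "X \<in> M \<rightarrow>\<^sub>M N" "Y \<in> M \<rightarrow>\<^sub>M N" "h \<in> borel_measurable N"
  shows "integrable M (\<lambda>\<omega>. h (X \<omega>)) \<longleftrightarrow> integrable M (\<lambda>\<omega>. h (Y \<omega>))"
  using assms by (metis integrable_distr_eq)

lemma (in prob_space) expectation_square_sum_le:
  fixes X :: "nat \<Rightarrow> 'a \<Rightarrow> real"
  assumes ind: "indep_vars (\<lambda>_. borel) X UNIV"
   and bnd: "\<And>j \<omega>. \<omega> \<in> space M \<Longrightarrow> \<bar>X j \<omega>\<bar> \<le> B"
   and mean0: "\<And>j. expectation (X j) = 0"
  shows "expectation (\<lambda>\<omega>. (\<Sum>j<n. X j \<omega>)^2) \<le> real n * B^2"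
proof -
  have [measurable]: "\<And>j. X j \<in> borel_measurable M"
    using ind unfolding indep_vars_def by auto
  have B0: "0 \<le> B" using bnd[of _ 0] not_empty[unfolded ex_in_conv[symmetric]] by force
  have int_prod: "integrable M (\<lambda>\<omega>. X i \<omega> * X j \<omega>)" for i j
    by (rule Bochner_Integration.integrable_bound[where f="\<lambda>_. B * B"])
      (use bnd B0 in \<open>auto simp: abs_mult intro!: mult_mono\<close>)
  have int: "integrable M (X j)" for j
    by (rule Bochner_Integration.integrable_bound[where f="\<lambda>_. B"]) (use bnd B0 in auto)
  have uncorrelated: "expectation (\<lambda>\<omega>. X i \<omega> * X j \<omega>) = 0" if "i \<noteq> j" for i j
  proof -
    have "indep_vars (\<lambda>_. borel) X {i, j}" using ind by (rule indep_vars_subset) auto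
    then have "(\<integral>\<omega>. (\<Prod>k\<in>{i,j}. X k \<omega>) \<partial>M) = (\<Prod>k\<in>{i,j}. expectation (X k))"
      by (intro indep_vars_lebesgue_integral) (auto intro: int)
    then show ?thesis using that mean0 by simp
  qed
  have second_moment: "expectation (\<lambda>\<omega>. X i \<omega> * X i \<omega>) \<le> B^2" for i
  proof -
    have "expectation (\<lambda>\<omega>. X i \<omega> * X i \<omega>) \<le> expectation (\<lambda>\<omega>. B * B)"
    proof (rule integral_mono)
      fix \<omega> assume "\<omega> \<in> space M"
      then have "\<bar>X i \<omega>\<bar> * \<bar>X i \<omega>\<bar> \<le> B * B" using bnd B0 by (intro mult_mono) auto
      then show "X i \<omega> * X i \<omega> \<le> B * B" by (metis abs_mult_self_eq)
    qed (use int_prod in auto)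
    then show ?thesis by (simp add: power2_eq_square prob_space)
  qed
  have "expectation (\<lambda>\<omega>. (\<Sum>j<n. X j \<omega>)^2) = (\<Sum>i<n. \<Sum>j<n. expectation (\<lambda>\<omega>. X i \<omega> * X j \<omega>))"
    by (simp add: power2_eq_square sum_product Bochner_Integration.integral_sum int_prod)
  also have "\<dots> = (\<Sum>i<n. expectation (\<lambda>\<omega>. X i \<omega> * X i \<omega>))"
  proof (rule sum.cong[OF refl])
    fix i assume "i \<in> {..<n}"
    then show "(\<Sum>j<n. expectation (\<lambda>\<omega>. X i \<omega> * X j \<omega>)) = expectation (\<lambda>\<omega>. X i \<omega> * X i \<omega>)"
      using uncorrelated by (subst sum.remove[of _ i]) auto
  qed
  also have "\<dots> \<le> real n * B^2"
    using sum_mono[of "{..<n}" "\<lambda>i. expectation (\<lambda>\<omega>. X i \<omega> * X i \<omega>)" "\<lambda>_. B^2"] second_moment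
    by simp
  finally show ?thesis .
qed

lemma (in prob_space) prob_abs_mean_ge_le:
  fixes X :: "nat \<Rightarrow> 'a \<Rightarrow> real"
  assumes ind: "indep_vars (\<lambda>_. borel) X UNIV"
   and bnd: "\<And>j \<omega>. \<omega> \<in> space M \<Longrightarrow> \<bar>X j \<omega>\<bar> \<le> B"
   and mean0: "\<And>j. expectation (X j) = 0"
   and n: "0 < n" and a: "0 < a"
  shows "prob {\<omega>\<in>space M. a \<le> \<bar>(\<Sum>j<n. X j \<omega>) / real n\<bar>} \<le> B^2 / (real n * a^2)"
proof -
  have [measurable]: "\<And>j. X j \<in> borel_measurable M"
    using ind unfolding indep_vars_def by auto
  have "integrable M (\<lambda>\<omega>. ((\<Sum>j<n. X j \<omega>) / real n)^2)"
  proof (rule Bochner_Integration.integrable_bound[where f="\<lambda>_. B^2"])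
    show "AE \<omega> in M. norm (((\<Sum>j<n. X j \<omega>) / real n)^2) \<le> norm (B^2)"
    proof (rule AE_I2)
      fix \<omega> assume \<omega>: "\<omega> \<in> space M"
      have "\<bar>\<Sum>j<n. X j \<omega>\<bar> \<le> real n * B"
        using order_trans[OF sum_abs sum_mono[of "{..<n}" "\<lambda>j. \<bar>X j \<omega>\<bar>" "\<lambda>_. B"]] bnd[OF \<omega>] by simp
      then have "\<bar>(\<Sum>j<n. X j \<omega>) / real n\<bar> \<le> B"
        using n by (simp add: abs_divide divide_le_eq mult.commute)
      then have "\<bar>(\<Sum>j<n. X j \<omega>) / real n\<bar>^2 \<le> B^2"
        by (rule power_mono) simp
      then show "norm (((\<Sum>j<n. X j \<omega>) / real n)^2) \<le> norm (B^2)"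
        by (simp only: power2_abs real_norm_def abs_power2)
    qed
  qed auto
  then have "prob {\<omega>\<in>space M. a^2 \<le> ((\<Sum>j<n. X j \<omega>) / real n)^2}
      \<le> expectation (\<lambda>\<omega>. ((\<Sum>j<n. X j \<omega>) / real n)^2) / a^2"
    using a by (intro integral_Markov_inequality_measure[where A="space M"]) auto
  also have "\<dots> = expectation (\<lambda>\<omega>. (\<Sum>j<n. X j \<omega>)^2) / (real n^2 * a^2)"
    by (simp add: power_divide)
  also have "\<dots> \<le> real n * B^2 / (real n^2 * a^2)"
    using expectation_square_sum_le[OF ind bnd mean0] a by (simp add: divide_right_mono)
  also have "\<dots> = B^2 / (real n * a^2)"
    using n by (simp add: power2_eq_square)
  finally show ?thesis
    using a by (simp add: abs_le_square_iff[of a, symmetric])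
qed

lemma abs_mean_diff_le:
  fixes z v :: "nat \<Rightarrow> real"
  assumes "0 < n"
  shows "\<bar>(\<Sum>j<n. z j) / real n - \<mu>\<bar>
    \<le> \<bar>(\<Sum>j<n. v j - c) / real n\<bar> + (\<Sum>j<n. \<bar>z j - v j\<bar>) / real n + \<bar>\<mu> - c\<bar>"
proof -
  have "(\<Sum>j<n. z j) / real n - \<mu> = (\<Sum>j<n. v j - c) / real n + (\<Sum>j<n. z j - v j) / real n - (\<mu> - c)"
    using assms by (simp add: sum_subtractf field_simps)
  moreover have "\<bar>(\<Sum>j<n. z j - v j) / real n\<bar> \<le> (\<Sum>j<n. \<bar>z j - v j\<bar>) / real n"
    by (simp add: abs_divide divide_right_mono sum_abs)
  ultimately show ?thesis by linarith
qed

lemma (in prob_space) integrable_truncate_at: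
  assumes "0 \<le> K" "Z \<in> borel_measurable M"
  shows "integrable M (\<lambda>\<omega>. truncate_at K (Z \<omega>))"
  by (rule Bochner_Integration.integrable_bound[where f="\<lambda>_. K"]) (use assms abs_truncate_at_le in auto)

lemma (in prob_space) expectation_truncate_at_bounds:
  fixes Z :: "'a \<Rightarrow> real"
  assumes K: "0 \<le> K" and int: "integrable M Z"
  shows "\<bar>expectation (\<lambda>\<omega>. truncate_at K (Z \<omega>))\<bar> \<le> K"
    and "\<bar>expectation Z - expectation (\<lambda>\<omega>. truncate_at K (Z \<omega>))\<bar>
      \<le> expectation (\<lambda>\<omega>. \<bar>Z \<omega> - truncate_at K (Z \<omega>)\<bar>)"
proof -
  have int_V: "integrable M (\<lambda>\<omega>. truncate_at K (Z \<omega>))"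
    using K int by (simp add: integrable_truncate_at)
  have "\<bar>expectation (\<lambda>\<omega>. truncate_at K (Z \<omega>))\<bar> \<le> expectation (\<lambda>\<omega>. \<bar>truncate_at K (Z \<omega>)\<bar>)"
    using integral_norm_bound[of M "\<lambda>\<omega>. truncate_at K (Z \<omega>)"] by simp
  also have "\<dots> \<le> expectation (\<lambda>_. K)"
    by (rule integral_mono) (use int_V K abs_truncate_at_le in auto)
  finally show "\<bar>expectation (\<lambda>\<omega>. truncate_at K (Z \<omega>))\<bar> \<le> K" by (simp add: prob_space)
  show "\<bar>expectation Z - expectation (\<lambda>\<omega>. truncate_at K (Z \<omega>))\<bar>
      \<le> expectation (\<lambda>\<omega>. \<bar>Z \<omega> - truncate_at K (Z \<omega>)\<bar>)"
    using integral_norm_bound[of M "\<lambda>\<omega>. Z \<omega> - truncate_at K (Z \<omega>)"] int int_V by simp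
qed

lemma (in prob_space) prob_mean_ge_le:
  fixes R :: "nat \<Rightarrow> 'a \<Rightarrow> real"
  assumes int: "\<And>j. integrable M (R j)" and nonneg: "\<And>j \<omega>. 0 \<le> R j \<omega>"
    and mean: "\<And>j. expectation (R j) = \<tau>" and n: "0 < n" and a: "0 < a"
  shows "prob {\<omega>\<in>space M. a \<le> (\<Sum>j<n. R j \<omega>) / real n} \<le> \<tau> / a"
proof -
  have "prob {\<omega>\<in>space M. a \<le> (\<Sum>j<n. R j \<omega>) / real n} \<le> (\<integral>\<omega>. (\<Sum>j<n. R j \<omega>) / real n \<partial>M) / a"
    using int a
    by (intro integral_Markov_inequality_measure[where A="space M"])
      (auto intro!: AE_I2 divide_nonneg_nonneg sum_nonneg nonneg)
  also have "(\<integral>\<omega>. (\<Sum>j<n. R j \<omega>) / real n \<partial>M) = \<tau>"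
    using n int by (simp add: Bochner_Integration.integral_sum mean)
  finally show ?thesis .
qed

lemma (in prob_space) prob_sample_mean_deviation_le:
  fixes Z :: "nat \<Rightarrow> 'a \<Rightarrow> real"
  assumes ind: "indep_vars (\<lambda>_. borel) Z UNIV"
    and ident: "\<And>j. distr M borel (Z j) = distr M borel (Z 0)"
    and int: "integrable M (Z 0)"
    and K: "0 \<le> K" and n: "0 < n" and \<epsilon>: "0 < \<epsilon>"
    and tail: "expectation (\<lambda>\<omega>. \<bar>Z 0 \<omega> - truncate_at K (Z 0 \<omega>)\<bar>) \<le> \<epsilon> / 4"
  shows "prob {\<omega>\<in>space M. \<epsilon> < \<bar>(\<Sum>j<n. Z j \<omega>) / real n - expectation (Z 0)\<bar>}
    \<le> 16 * K^2 / (real n * \<epsilon>^2) + 4 * expectation (\<lambda>\<omega>. \<bar>Z 0 \<omega> - truncate_at K (Z 0 \<omega>)\<bar>) / \<epsilon>"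
proof -
  have Z_meas[measurable]: "\<And>j. Z j \<in> borel_measurable M" using ind unfolding indep_vars_def by auto
  define V where "V j \<omega> = truncate_at K (Z j \<omega>)" for j \<omega>
  define R where "R j \<omega> = \<bar>Z j \<omega> - V j \<omega>\<bar>" for j \<omega>
  define \<mu>K where "\<mu>K = expectation (V 0)"
  define \<tau> where "\<tau> = expectation (R 0)"
  have same_law: "expectation (\<lambda>\<omega>. h (Z j \<omega>)) = expectation (\<lambda>\<omega>. h (Z 0 \<omega>))"
    "integrable M (\<lambda>\<omega>. h (Z j \<omega>)) \<longleftrightarrow> integrable M (\<lambda>\<omega>. h (Z 0 \<omega>))"
    if "h \<in> borel_measurable borel" for h :: "real \<Rightarrow> real" and j
    using integral_comp_eq_if_distr_eq[OF ident Z_meas Z_meas that]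
      integrable_comp_iff_if_distr_eq[OF ident Z_meas Z_meas that] by simp_all
  have int_Z: "integrable M (Z j)" for j using same_law(2)[of "\<lambda>z. z" j] int by simp
  have int_V: "integrable M (V j)" for j
    unfolding V_def[abs_def] by (rule integrable_truncate_at[OF K]) simp
  have \<mu>K: "\<bar>\<mu>K\<bar> \<le> K" "\<bar>expectation (Z 0) - \<mu>K\<bar> \<le> \<tau>"
    using expectation_truncate_at_bounds[OF K int_Z]
    unfolding \<mu>K_def \<tau>_def V_def[abs_def] R_def[abs_def] by simp_all
  define A where "A = {\<omega>\<in>space M. \<epsilon> / 2 \<le> \<bar>(\<Sum>j<n. V j \<omega> - \<mu>K) / real n\<bar>}"
  define B where "B = {\<omega>\<in>space M. \<epsilon> / 4 \<le> (\<Sum>j<n. R j \<omega>) / real n}"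
  have "{\<omega>\<in>space M. \<epsilon> < \<bar>(\<Sum>j<n. Z j \<omega>) / real n - expectation (Z 0)\<bar>} \<subseteq> A \<union> B"
  proof (rule subsetI, rule ccontr)
    fix \<omega> assume \<omega>: "\<omega> \<in> {\<omega>\<in>space M. \<epsilon> < \<bar>(\<Sum>j<n. Z j \<omega>) / real n - expectation (Z 0)\<bar>}"
      and "\<omega> \<notin> A \<union> B"
    then have "\<bar>(\<Sum>j<n. V j \<omega> - \<mu>K) / real n\<bar> < \<epsilon> / 2" "(\<Sum>j<n. R j \<omega>) / real n < \<epsilon> / 4"
      by (auto simp: A_def B_def)
    then show False
      using abs_mean_diff_le[OF n, of "\<lambda>j. Z j \<omega>" "expectation (Z 0)" "\<lambda>j. V j \<omega>" \<mu>K]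
        \<omega> \<mu>K(2) tail unfolding R_def \<tau>_def mem_Collect_eq V_def by linarith
  qed
  then have "prob {\<omega>\<in>space M. \<epsilon> < \<bar>(\<Sum>j<n. Z j \<omega>) / real n - expectation (Z 0)\<bar>} \<le> prob A + prob B"
    unfolding A_def B_def V_def R_def
    by (intro order_trans[OF finite_measure_mono measure_Un_le]) auto
  also have "prob A \<le> (2 * K)^2 / (real n * (\<epsilon> / 2)^2)"
    unfolding A_def
  proof (rule prob_abs_mean_ge_le[OF _ _ _ n])
    show "indep_vars (\<lambda>_. borel) (\<lambda>j \<omega>. V j \<omega> - \<mu>K) UNIV"
      unfolding V_def by (rule indep_vars_compose2[OF ind]) measurable
    show "\<bar>V j \<omega> - \<mu>K\<bar> \<le> 2 * K" for j \<omega>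
      using abs_truncate_at_le[OF K, of "Z j \<omega>"] \<mu>K(1) unfolding V_def by linarith
    show "expectation (\<lambda>\<omega>. V j \<omega> - \<mu>K) = 0" for j
      using int_V same_law(1)[of "truncate_at K" j] by (simp add: \<mu>K_def V_def[abs_def] prob_space)
  qed (use \<epsilon> in simp)
  also have "prob B \<le> \<tau> / (\<epsilon> / 4)"
    unfolding B_def
  proof (rule prob_mean_ge_le[OF _ _ _ n])
    show "integrable M (R j)" for j unfolding R_def using int_Z int_V by auto
    show "expectation (R j) = \<tau>" for j
      unfolding \<tau>_def R_def V_def by (rule same_law(1)) measurable
  qed (use \<epsilon> in \<open>simp_all add: R_def\<close>)
  finally show ?thesis
    using \<epsilon> by (simp add: \<tau>_def R_def[abs_def] V_def[abs_def] field_simps power2_eq_square)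
qed

lemma (in prob_space) weak_law_of_large_numbers:
  fixes Z :: "nat \<Rightarrow> 'a \<Rightarrow> real"
  assumes ind: "indep_vars (\<lambda>_. borel) Z UNIV"
    and ident: "\<And>j. distr M borel (Z j) = distr M borel (Z 0)"
    and int: "integrable M (Z 0)"
  shows "tendsto_in_prob M (\<lambda>n \<omega>. (\<Sum>j<n. Z j \<omega>) / real n) (expectation (Z 0))"
  unfolding tendsto_in_prob_def real_norm_def
proof (intro allI impI LIMSEQ_I)
  fix \<epsilon> r :: real assume \<epsilon>: "0 < \<epsilon>" and r: "0 < r"
  define \<tau> where "\<tau> K = expectation (\<lambda>\<omega>. \<bar>Z 0 \<omega> - truncate_at K (Z 0 \<omega>)\<bar>)" for K
  obtain m :: nat where m: "\<bar>\<tau> (real m) - 0\<bar> < min (\<epsilon> / 4) (r * \<epsilon> / 8)"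
    using LIMSEQ_D[OF tendsto_expectation_truncation_error[OF int], of "min (\<epsilon> / 4) (r * \<epsilon> / 8)"] \<epsilon> r
    unfolding \<tau>_def by auto
  obtain N :: nat where N: "32 * real m ^ 2 / (r * \<epsilon>^2) < real N"
    using reals_Archimedean2 by blast
  have "prob {\<omega>\<in>space M. \<epsilon> < \<bar>(\<Sum>j<n. Z j \<omega>) / real n - expectation (Z 0)\<bar>} < r"
    if n: "Suc N \<le> n" for n
  proof -
    have "prob {\<omega>\<in>space M. \<epsilon> < \<bar>(\<Sum>j<n. Z j \<omega>) / real n - expectation (Z 0)\<bar>}
        \<le> 16 * real m ^ 2 / (real n * \<epsilon>^2) + 4 * \<tau> (real m) / \<epsilon>"
      using prob_sample_mean_deviation_le[OF ind ident int _ _ \<epsilon>, of "real m" n] m n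
      unfolding \<tau>_def by simp
    also have "16 * real m ^ 2 / (real n * \<epsilon>^2) < r / 2"
    proof -
      have "32 * real m ^ 2 / (r * \<epsilon>^2) < real n" using N n by linarith
      then show ?thesis using n r \<epsilon> by (simp add: field_simps)
    qed
    also have "4 * \<tau> (real m) / \<epsilon> < r / 2"
    proof -
      have "\<tau> (real m) < r * \<epsilon> / 8" using m abs_ge_self[of "\<tau> (real m)"] by simp
      then show ?thesis using \<epsilon> by (simp add: field_simps)
    qed
    finally show ?thesis by simp
  qed
  then show "\<exists>no. \<forall>n\<ge>no. norm (prob {\<omega>\<in>space M. \<epsilon> < \<bar>(\<Sum>j<n. Z j \<omega>) / real n - expectation (Z 0)\<bar>} - 0) < r"
    by auto
qed

lemma (in prob_space) weak_law_of_large_numbers_distr: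
  assumes ind: "indep_vars (\<lambda>_. N) Y UNIV"
    and law: "\<And>j. distr M N (Y j) = L"
    and f[measurable]: "f \<in> borel_measurable N" and int: "integrable L f"
  shows "tendsto_in_prob M (\<lambda>n \<omega>. (\<Sum>j<n. f (Y j \<omega>)) / real n) (integral\<^sup>L L f)"
proof -
  have Y[measurable]: "Y j \<in> M \<rightarrow>\<^sub>M N" for j using ind unfolding indep_vars_def by auto
  have law_f: "distr M borel (\<lambda>\<omega>. f (Y j \<omega>)) = distr L borel f" for j
    using distr_distr[OF f Y, of j] by (simp add: comp_def law)
  have "integrable M (\<lambda>\<omega>. f (Y 0 \<omega>))"
    using int by (simp add: integrable_distr_eq flip: law[of 0])
  moreover have "expectation (\<lambda>\<omega>. f (Y 0 \<omega>)) = integral\<^sup>L L f"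
    by (simp add: integral_distr flip: law[of 0])
  moreover have "indep_vars (\<lambda>_. borel) (\<lambda>j \<omega>. f (Y j \<omega>)) UNIV"
    using indep_vars_compose2[OF ind, of "\<lambda>_. f" "\<lambda>_. borel"] by simp
  ultimately show ?thesis
    using weak_law_of_large_numbers[of "\<lambda>j \<omega>. f (Y j \<omega>)"] law_f by simp
qed

section \<open>Stability of linear systems\<close>

lemma norm_matrix_vector_mult_le:
  fixes A :: "real^'n^'m"
  shows "norm (A *v x) \<le> (\<Sum>i\<in>UNIV. \<Sum>k\<in>UNIV. \<bar>A $ i $ k\<bar>) * norm x"
  using onorm[OF matrix_vector_mul_bounded_linear, of A x] onorm_le_matrix_component_sum[of A]
  by (meson mult_right_mono norm_ge_zero order_trans)

lemma matrix_mul_matrix_inv: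
  fixes H :: "'a::field^'n^'n"
  assumes "invertible H"
  shows "H ** matrix_inv H = mat 1"
proof -
  from assms obtain H' where "H ** H' = mat 1 \<and> H' ** H = mat 1" unfolding invertible_def by blast
  then have "H ** matrix_inv H = mat 1 \<and> matrix_inv H ** H = mat 1"
    unfolding matrix_inv_def by (rule someI)
  then show ?thesis by simp
qed

lemma invertible_matrix_bounded_below:
  fixes G :: "real^'n^'n"
  assumes "invertible G"
  obtains c where "0 < c" "\<And>u. c * norm u \<le> norm (G *v u)"
proof -
  obtain G' where G': "G' ** G = mat 1" using assms invertible_left_inverse by blast
  define S where "S = (\<Sum>i\<in>UNIV. \<Sum>k\<in>UNIV. \<bar>G' $ i $ k\<bar>)"
  have S: "0 \<le> S" unfolding S_def by (intro sum_nonneg) auto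
  have "norm u \<le> (S + 1) * norm (G *v u)" for u
  proof -
    have "norm u = norm (G' *v (G *v u))" by (simp add: matrix_vector_mul_assoc G')
    also have "\<dots> \<le> S * norm (G *v u)" unfolding S_def by (rule norm_matrix_vector_mult_le)
    also have "\<dots> \<le> (S + 1) * norm (G *v u)" by (simp add: mult_right_mono)
    finally show ?thesis .
  qed
  then have "1 / (S + 1) * norm u \<le> norm (G *v u)" for u
    using S by (simp add: field_simps)
  with S show ?thesis using that[of "1 / (S + 1)"] by simp
qed

lemma invertible_if_bounded_below:
  fixes A :: "real^'n^'n"
  assumes c: "0 < c" and bounded: "\<And>u. c * norm u \<le> norm (A *v u)"
  shows "invertible A"
proof -
  have "inj ((*v) A)"
  proof (rule injI)
    fix u w assume "A *v u = A *v w"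
    then have "c * norm (u - w) \<le> 0"
      using bounded[of "u - w"] by (simp add: matrix_vector_mult_diff_distrib)
    then show "u = w" using c by (simp add: mult_le_0_iff)
  qed
  then show ?thesis
    using matrix_left_invertible_injective invertible_left_inverse by blast
qed

lemma norm_matrix_inv_mult_diff_le:
  fixes G H :: "real^'n^'n" and X b :: "real^'n" and c r \<rho> :: real
  assumes c: "0 < c" "\<And>u. c * norm u \<le> norm (G *v u)"
    and r: "0 < r"
    and H: "\<And>i k. \<bar>H $ i $ k / r - G $ i $ k\<bar> \<le> \<rho>"
    and b: "\<And>i. \<bar>b $ i / r - (G *v X) $ i\<bar> \<le> \<rho>"
    and \<rho>: "real CARD('n) ^ 2 * \<rho> \<le> c / 2"
  shows "norm (matrix_inv H *v b - X) \<le> 2 / c * (real CARD('n) * \<rho> + real CARD('n) ^ 2 * \<rho> * norm X)"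
proof -
  define e where "e = real CARD('n) ^ 2 * \<rho>"
  define E where "E = (\<chi> i k. H $ i $ k / r - G $ i $ k)"
  have scaled_H: "(1 / r) *\<^sub>R (H *v u) = G *v u + E *v u" for u
    using r by (simp add: vec_eq_iff E_def matrix_vector_mult_def sum_distrib_left
        field_simps flip: sum.distrib)
  have "(\<Sum>i\<in>UNIV. \<Sum>k\<in>UNIV. \<bar>E $ i $ k\<bar>) \<le> (\<Sum>i\<in>(UNIV::'n set). \<Sum>k\<in>(UNIV::'n set). \<rho>)"
    unfolding E_def by (intro sum_mono) (simp add: H)
  then have E_sum: "(\<Sum>i\<in>UNIV. \<Sum>k\<in>UNIV. \<bar>E $ i $ k\<bar>) \<le> e"
    by (simp add: e_def power2_eq_square)
  have E_bound: "norm (E *v u) \<le> e * norm u" for u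
    using order_trans[OF norm_matrix_vector_mult_le mult_right_mono[OF E_sum norm_ge_zero]] .
  have "norm ((1 / r) *\<^sub>R b - G *v X) \<le> (\<Sum>i\<in>UNIV. \<bar>((1 / r) *\<^sub>R b - G *v X) $ i\<bar>)"
    by (rule norm_le_l1_cart)
  also have "\<dots> \<le> (\<Sum>i\<in>(UNIV::'n set). \<rho>)"
    using b by (intro sum_mono) simp
  finally have b_close: "norm ((1 / r) *\<^sub>R b - G *v X) \<le> CARD('n) * \<rho>" by simp
  have lower: "c / 2 * norm u \<le> norm ((1 / r) *\<^sub>R (H *v u))" for u
  proof -
    have "c * norm u \<le> norm (G *v u + E *v u) + e * norm u"
      using c(2)[of u] E_bound[of u] norm_triangle_ineq4[of "G *v u + E *v u" "E *v u"] by simp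
    moreover have "e * norm u \<le> c / 2 * norm u"
      using \<rho> unfolding e_def by (rule mult_right_mono) simp
    ultimately show ?thesis unfolding scaled_H by linarith
  qed
  have "c * r / 2 * norm u \<le> norm (H *v u)" for u
    using lower[of u] r by (simp add: field_simps)
  then have inv: "invertible H"
    using c(1) r by (intro invertible_if_bounded_below[of "c * r / 2"]) auto
  define v where "v = matrix_inv H *v b - X"
  have "H *v v = b - H *v X"
    using matrix_mul_matrix_inv[OF inv]
    by (simp add: v_def matrix_vector_mult_diff_distrib matrix_vector_mul_assoc)
  then have "(1 / r) *\<^sub>R (H *v v) = (1 / r) *\<^sub>R b - (1 / r) *\<^sub>R (H *v X)"
    by (simp add: scaleR_diff_right)
  also have "\<dots> = ((1 / r) *\<^sub>R b - G *v X) - E *v X"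
    unfolding scaled_H by simp
  finally have "norm ((1 / r) *\<^sub>R (H *v v)) = norm (((1 / r) *\<^sub>R b - G *v X) - E *v X)"
    by simp
  then have "norm ((1 / r) *\<^sub>R (H *v v)) \<le> CARD('n) * \<rho> + e * norm X"
    using b_close E_bound[of X] norm_triangle_ineq4[of "(1 / r) *\<^sub>R b - G *v X" "E *v X"] by linarith
  then have "c / 2 * norm v \<le> CARD('n) * \<rho> + e * norm X" using lower[of v] by linarith
  then show ?thesis
    using c(1) unfolding v_def[symmetric] e_def by (simp add: field_simps)
qed

lemma matrix_inv_mult_entrywise_stable:
  fixes G :: "real^'n^'n" and X :: "real^'n"
  assumes G: "invertible G" and \<epsilon>: "0 < \<epsilon>"
  obtains \<rho> where "0 < \<rho>"
    "\<And>H b r. 0 < r \<Longrightarrow> (\<And>i k. \<bar>H $ i $ k / r - G $ i $ k\<bar> \<le> \<rho>) \<Longrightarrow>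
      (\<And>i. \<bar>b $ i / r - (G *v X) $ i\<bar> \<le> \<rho>) \<Longrightarrow> norm (matrix_inv H *v b - X) \<le> \<epsilon>"
proof -
  obtain c where c: "0 < c" "\<And>u. c * norm u \<le> norm (G *v u)"
    using invertible_matrix_bounded_below[OF G] by blast
  define N where "N = real CARD('n)"
  define D where "D = N + N^2 * norm X"
  define \<rho> where "\<rho> = min (c / (2 * N^2)) (\<epsilon> * c / (2 * D))"
  have N: "0 < N" by (simp add: N_def)
  then have D: "0 < D" by (simp add: D_def add_pos_nonneg)
  have \<rho>_le: "\<rho> \<le> c / (2 * N^2)" "\<rho> \<le> \<epsilon> * c / (2 * D)" by (simp_all add: \<rho>_def)
  have "0 < \<rho>" using c(1) \<epsilon> N D by (simp add: \<rho>_def)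
  moreover have "N^2 * \<rho> \<le> c / 2" using \<rho>_le(1) N by (simp add: field_simps)
  moreover have "2 / c * (N * \<rho> + N^2 * \<rho> * norm X) \<le> \<epsilon>"
  proof -
    have "N * \<rho> + N^2 * \<rho> * norm X = \<rho> * D" by (simp add: D_def algebra_simps)
    then show ?thesis using \<rho>_le(2) c(1) D by (simp add: field_simps)
  qed
  ultimately show ?thesis
    using that[of \<rho>] norm_matrix_inv_mult_diff_le[OF c] unfolding N_def by (meson order_trans)
qed

lemma (in prob_space) tendsto_prob_UN_finite:
  assumes "finite I" "\<And>i n. i \<in> I \<Longrightarrow> A i n \<in> events"
    and "\<And>i. i \<in> I \<Longrightarrow> (\<lambda>n. prob (A i n)) \<longlonglongrightarrow> 0"
  shows "(\<lambda>n. prob (\<Union>i\<in>I. A i n)) \<longlonglongrightarrow> 0"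
proof (rule tendsto_sandwich[OF _ _ tendsto_const tendsto_null_sum])
  show "\<forall>\<^sub>F n in sequentially. prob (\<Union>i\<in>I. A i n) \<le> (\<Sum>i\<in>I. prob (A i n))"
    using assms(1,2) by (intro always_eventually allI measure_UNION_le) auto
qed (use assms(3) in auto)

lemma (in prob_space) tendsto_in_prob_matrix_inv_mult:
  fixes H :: "nat \<Rightarrow> 'a \<Rightarrow> real^'n^'n" and b :: "nat \<Rightarrow> 'a \<Rightarrow> real^'n"
  assumes G: "invertible G"
    and H_meas: "\<And>n i k. (\<lambda>\<omega>. H n \<omega> $ i $ k) \<in> borel_measurable M"
    and b_meas: "\<And>n i. (\<lambda>\<omega>. b n \<omega> $ i) \<in> borel_measurable M"
    and H_lim: "\<And>i k. tendsto_in_prob M (\<lambda>n \<omega>. H n \<omega> $ i $ k / real n) (G $ i $ k)"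
    and b_lim: "\<And>i. tendsto_in_prob M (\<lambda>n \<omega>. b n \<omega> $ i / real n) ((G *v X) $ i)"
  shows "tendsto_in_prob M (\<lambda>n \<omega>. X - matrix_inv (H n \<omega>) *v b n \<omega>) 0"
  unfolding tendsto_in_prob_def
proof (intro allI impI)
  fix \<epsilon> :: real assume \<epsilon>: "0 < \<epsilon>"
  obtain \<rho> where \<rho>: "0 < \<rho>"
    and stable: "\<And>H b r. 0 < r \<Longrightarrow> (\<And>i k. \<bar>H $ i $ k / r - G $ i $ k\<bar> \<le> \<rho>) \<Longrightarrow>
      (\<And>i. \<bar>b $ i / r - (G *v X) $ i\<bar> \<le> \<rho>) \<Longrightarrow> norm (matrix_inv H *v b - X) \<le> \<epsilon> / 2"
    using matrix_inv_mult_entrywise_stable[OF G half_gt_zero[OF \<epsilon>], of X] by blast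
  define AH where "AH q n = {\<omega>\<in>space M. \<rho> < \<bar>H n \<omega> $ fst q $ snd q / real n - G $ fst q $ snd q\<bar>}"
    for q :: "'n \<times> 'n" and n
  define AB where "AB i n = {\<omega>\<in>space M. \<rho> < \<bar>b n \<omega> $ i / real n - (G *v X) $ i\<bar>}" for i n
  have events_AH: "AH q n \<in> events" and events_AB: "AB i n \<in> events" for q i n
    unfolding AH_def AB_def using H_meas b_meas by measurable
  have "{\<omega>\<in>space M. \<epsilon> < norm (X - matrix_inv (H n \<omega>) *v b n \<omega> - 0)} \<subseteq> (\<Union>q. AH q n) \<union> (\<Union>i. AB i n)"
    if n: "0 < n" for n
  proof (rule subsetI, rule ccontr)
    fix \<omega> assume \<omega>: "\<omega> \<in> {\<omega>\<in>space M. \<epsilon> < norm (X - matrix_inv (H n \<omega>) *v b n \<omega> - 0)}"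
      and "\<omega> \<notin> (\<Union>q. AH q n) \<union> (\<Union>i. AB i n)"
    then have "norm (matrix_inv (H n \<omega>) *v b n \<omega> - X) \<le> \<epsilon> / 2"
      using n by (intro stable) (auto simp: AH_def AB_def not_less)
    then show False using \<omega> \<epsilon> by (simp add: norm_minus_commute)
  qed
  then have bound: "measure M {\<omega>\<in>space M. \<epsilon> < norm (X - matrix_inv (H n \<omega>) *v b n \<omega> - 0)}
      \<le> prob (\<Union>q. AH q n) + prob (\<Union>i. AB i n)" if "0 < n" for n
    using events_AH events_AB that by (intro order_trans[OF finite_measure_mono measure_Un_le]) auto
  have lim: "(\<lambda>n. prob (\<Union>q. AH q n) + prob (\<Union>i. AB i n)) \<longlonglongrightarrow> 0"
    using H_lim b_lim \<rho>
    by (intro tendsto_add_zero tendsto_prob_UN_finite events_AH events_AB)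
      (auto simp: AH_def AB_def tendsto_in_prob_def)
  show "(\<lambda>n. measure M {\<omega>\<in>space M. \<epsilon> < norm (X - matrix_inv (H n \<omega>) *v b n \<omega> - 0)}) \<longlonglongrightarrow> 0"
  proof (rule tendsto_sandwich[OF _ _ tendsto_const lim])
    show "\<forall>\<^sub>F n in sequentially. measure M {\<omega>\<in>space M. \<epsilon> < norm (X - matrix_inv (H n \<omega>) *v b n \<omega> - 0)}
        \<le> prob (\<Union>q. AH q n) + prob (\<Union>i. AB i n)"
      using eventually_gt_at_top[of 0] by eventually_elim (rule bound)
  qed simp
qed

section \<open>Moments under a conditional density\<close>

lemma has_bochner_integral_erlang_mean:
  assumes l: "0 < l"
  shows "has_bochner_integral lborel (\<lambda>t. erlang_density k l t * t) (real (Suc k) / l)"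
proof (rule has_bochner_integral_nn_integral)
  have "(\<integral>\<^sup>+ t. ennreal (erlang_density k l t * t ^ 1) \<partial>lborel) = ennreal (fact (k + 1) / (fact k * l ^ 1))"
    using nn_integral_erlang_ith_moment[OF l, of k 1] by simp
  also have "fact (k + 1) / (fact k * l ^ 1) = real (Suc k) / l"
    by (simp add: fact_Suc)
  finally show "(\<integral>\<^sup>+ t. ennreal (erlang_density k l t * t) \<partial>lborel) = ennreal (real (Suc k) / l)"
    by simp
qed (use l in \<open>auto simp: erlang_density_def\<close>)

lemma integral_density_pair_fst_mult_snd:
  fixes D :: "'b measure" and k :: "'b \<times> real \<Rightarrow> real" and h m :: "'b \<Rightarrow> real"
  assumes D: "sigma_finite_measure D"
    and k[measurable]: "k \<in> borel_measurable (D \<Otimes>\<^sub>M lborel)"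
    and k_nonneg: "\<And>q. 0 \<le> k q" and k_support: "\<And>p t. t < 0 \<Longrightarrow> k (p, t) = 0"
    and mean: "AE p in D. has_bochner_integral lborel (\<lambda>t. k (p, t) * t) (m p)"
    and h[measurable]: "h \<in> borel_measurable D"
    and int: "integrable D (\<lambda>p. h p * m p)"
  shows "integrable (density (D \<Otimes>\<^sub>M lborel) k) (\<lambda>q. h (fst q) * snd q)"
    and "(\<integral>q. h (fst q) * snd q \<partial>density (D \<Otimes>\<^sub>M lborel) k) = (\<integral>p. h p * m p \<partial>D)"
proof -
  interpret D: sigma_finite_measure D by (rule D)
  interpret pair_sigma_finite D lborel ..
  define F where "F q = k q * (h (fst q) * snd q)" for q
  have [measurable]: "F \<in> borel_measurable (D \<Otimes>\<^sub>M lborel)" unfolding F_def by measurable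
  have kt_nonneg: "0 \<le> k (p, t) * t" for p t
    using k_nonneg[of "(p, t)"] k_support[of t p] by (cases "t < 0") auto
  have inner: "AE p in D. has_bochner_integral lborel (\<lambda>t. F (p, t)) (h p * m p)"
    using mean
  proof eventually_elim
    case (elim p)
    then show ?case
      using has_bochner_integral_mult_right[OF elim, of "h p"] by (simp add: F_def mult_ac)
  qed
  have inner_abs: "AE p in D. has_bochner_integral lborel (\<lambda>t. norm (F (p, t))) \<bar>h p * m p\<bar>"
    using mean
  proof eventually_elim
    case (elim p)
    have "0 \<le> m p"
      using has_bochner_integral_integral_eq[OF elim] kt_nonneg
        Bochner_Integration.integral_nonneg[of lborel "\<lambda>t. k (p, t) * t"] by simp
    moreover have "norm (F (p, t)) = \<bar>h p\<bar> * (k (p, t) * t)" for t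
    proof -
      have "norm (F (p, t)) = \<bar>h p\<bar> * \<bar>k (p, t) * t\<bar>" by (simp add: F_def abs_mult)
      then show ?thesis using abs_of_nonneg[OF kt_nonneg[of p t]] by simp
    qed
    ultimately show ?case
      using has_bochner_integral_mult_right[OF elim, of "\<bar>h p\<bar>"] by (simp add: abs_mult)
  qed
  have int_F: "integrable (D \<Otimes>\<^sub>M lborel) F"
  proof (rule Fubini_integrable)
    show "integrable D (\<lambda>p. \<integral>t. norm (F (p, t)) \<partial>lborel)"
    proof (rule integrable_cong_AE_imp)
      show "integrable D (\<lambda>p. \<bar>h p * m p\<bar>)" using int by simp
      show "AE p in D. \<bar>h p * m p\<bar> = (\<integral>t. norm (F (p, t)) \<partial>lborel)"
        using inner_abs by (auto elim!: eventually_mono dest: has_bochner_integral_integral_eq)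
    qed measurable
    show "AE p in D. integrable lborel (\<lambda>t. F (p, t))"
      using inner by eventually_elim (rule integrable.intros)
  qed measurable
  have k_nonneg_AE: "AE q in D \<Otimes>\<^sub>M lborel. 0 \<le> k q" by (simp add: k_nonneg)
  show "integrable (density (D \<Otimes>\<^sub>M lborel) k) (\<lambda>q. h (fst q) * snd q)"
    using int_F k_nonneg_AE by (subst integrable_density) (auto simp: F_def[abs_def])
  have "(\<integral>q. h (fst q) * snd q \<partial>density (D \<Otimes>\<^sub>M lborel) k) = integral\<^sup>L (D \<Otimes>\<^sub>M lborel) F"
    using k_nonneg_AE by (subst integral_density) (auto simp: F_def[abs_def])
  also have "\<dots> = (\<integral>p. (\<integral>t. F (p, t) \<partial>lborel) \<partial>D)"
    by (rule integral_fst'[OF int_F, symmetric])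
  also have "\<dots> = (\<integral>p. h p * m p \<partial>D)"
    using inner borel_measurable_integrable[OF int]
    by (intro integral_cong_AE) (auto elim!: eventually_mono dest: has_bochner_integral_integral_eq)
  finally show "(\<integral>q. h (fst q) * snd q \<partial>density (D \<Otimes>\<^sub>M lborel) k) = (\<integral>p. h p * m p \<partial>D)" .
qed

section \<open>The sensor model\<close>

definition regressor :: "3 \<Rightarrow> real \<times> real \<Rightarrow> real" where
  "regressor i p = (vector [fst p, snd p, 1] :: real^3) $ i"

lemma regressor_simps[simp]: "regressor 1 p = fst p" "regressor 2 p = snd p" "regressor 3 p = 1"
  by (simp_all add: regressor_def)

lemma regressor_cases: "regressor i = fst \<or> regressor i = snd \<or> regressor i = (\<lambda>_. 1)"
  using exhaust_3[of i] by (auto simp: fun_eq_iff)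

lemma regressor_measurable[measurable]: "regressor i \<in> borel_measurable borel"
proof (rule borel_measurable_continuous_onI)
  show "continuous_on UNIV (regressor i)"
    using regressor_cases[of i] by (auto intro!: continuous_intros)
qed

lemma A1_row_nth: "A1_row xs ys j $ i = regressor i (xs j, ys j)"
  by (simp add: A1_row_def regressor_def)

lemma abs_regressor_mult_le: "\<bar>regressor i p * regressor k p\<bar> \<le> (fst p)^2 + (snd p)^2 + 1"
proof -
  have sq: "(regressor i p)^2 \<le> (fst p)^2 + (snd p)^2 + 1" for i
    using regressor_cases[of i] by auto
  have "2 * \<bar>regressor i p * regressor k p\<bar> \<le> (regressor i p)^2 + (regressor k p)^2"
    using zero_le_power2[of "\<bar>regressor i p\<bar> - \<bar>regressor k p\<bar>"]
    by (simp add: power2_eq_square abs_mult algebra_simps)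
  then show ?thesis using sq[of i] sq[of k] by linarith
qed

lemma t_star_eq_regressors:
  assumes "s \<noteq> 0"
  shows "t_star t_o s \<theta> xo yo (fst p) (snd p) - t_o = (\<Sum>k\<in>UNIV. regressor k p * X1_star s \<theta> xo yo $ k)"
  using assms by (simp add: sum_3 t_star_def X1_star_def field_simps)

locale sensor_model =
  fixes M :: "'a measure"
    and xs ys T :: "nat \<Rightarrow> 'a \<Rightarrow> real"
    and t_o s \<theta> xo yo :: real
    and lam :: nat
  assumes prob: "prob_space M"
    and s_pos: "s > 0"
    and lam_pos: "lam \<ge> 1"
    and meas_x: "\<And>j. xs j \<in> borel_measurable M"
    and meas_y: "\<And>j. ys j \<in> borel_measurable M"
    and meas_T: "\<And>j. T j \<in> borel_measurable M"
    and indep: "prob_space.indep_vars M (\<lambda>_. borel) (\<lambda>j \<omega>. (xs j \<omega>, ys j \<omega>, T j \<omega>)) UNIV"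
    and ident: "\<And>j. distr M borel (\<lambda>\<omega>. (xs j \<omega>, ys j \<omega>)) = distr M borel (\<lambda>\<omega>. (xs 0 \<omega>, ys 0 \<omega>))"
    and int_x2: "integrable M (\<lambda>\<omega>. (xs 0 \<omega>)\<^sup>2)"
    and int_y2: "integrable M (\<lambda>\<omega>. (ys 0 \<omega>)\<^sup>2)"
    and mean_x: "(\<integral>\<omega>. xs 0 \<omega> \<partial>M) = 0"
    and mean_y: "(\<integral>\<omega>. ys 0 \<omega> \<partial>M) = 0"
    and nonsing: "det (vector [vector [covar M (xs 0) (xs 0), covar M (xs 0) (ys 0)],
                               vector [covar M (ys 0) (xs 0), covar M (ys 0) (ys 0)]] :: real^2^2) \<noteq> 0"
    and after: "\<And>j. AE \<omega> in M. t_star t_o s \<theta> xo yo (xs j \<omega>) (ys j \<omega>) > t_o"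
    and cond_law: "\<And>j A B. A \<in> sets (borel :: (real \<times> real) measure) \<Longrightarrow> B \<in> sets (borel :: real measure) \<Longrightarrow>
        emeasure M {\<omega> \<in> space M. (xs j \<omega>, ys j \<omega>) \<in> A \<and> T j \<omega> - t_o \<in> B}
        = (\<integral>\<^sup>+ p. indicator A p *
              emeasure (density lborel (erlang_density (2 * lam - 1)
                 (2 * real lam / (t_star t_o s \<theta> xo yo (fst p) (snd p) - t_o)))) B
            \<partial>(distr M borel (\<lambda>\<omega>. (xs j \<omega>, ys j \<omega>))))"
begin

sublocale prob_space M by (rule prob)

declare meas_x[measurable] meas_y[measurable] meas_T[measurable]

definition delay :: "real \<times> real \<Rightarrow> real" where
  "delay p = t_star t_o s \<theta> xo yo (fst p) (snd p) - t_o"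

lemma delay_measurable[measurable]: "delay \<in> borel_measurable borel"
  unfolding delay_def t_star_def
  by (intro borel_measurable_continuous_onI continuous_intros)

definition sensor_law :: "(real \<times> real) measure" where
  "sensor_law = distr M borel (\<lambda>\<omega>. (xs 0 \<omega>, ys 0 \<omega>))"

lemma sets_sensor_law[measurable_cong]: "sets sensor_law = sets borel"
  by (simp add: sensor_law_def)

lemma prob_space_sensor_law: "prob_space sensor_law"
  unfolding sensor_law_def by (rule prob_space_distr) simp

lemma AE_sensor_law_delay_pos: "AE p in sensor_law. 0 < delay p"
proof -
  have "AE \<omega> in M. 0 < delay (xs 0 \<omega>, ys 0 \<omega>)" using after[of 0] by (simp add: delay_def)
  then show ?thesis unfolding sensor_law_def by (subst AE_distr_iff) auto
qed

lemma integral_sensor_law: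
  fixes g :: "real \<times> real \<Rightarrow> real"
  assumes [measurable]: "g \<in> borel_measurable borel"
  shows "integral\<^sup>L sensor_law g = (\<integral>\<omega>. g (xs 0 \<omega>, ys 0 \<omega>) \<partial>M)"
    and "integrable sensor_law g \<longleftrightarrow> integrable M (\<lambda>\<omega>. g (xs 0 \<omega>, ys 0 \<omega>))"
  using assms by (simp_all add: sensor_law_def integral_distr integrable_distr_eq)

text \<open>The guard is irrelevant almost surely, since \<open>delay > 0\<close> on the support of the sensor law;
  it makes the density nonnegative everywhere.\<close>
definition arrival_density :: "(real \<times> real) \<times> real \<Rightarrow> real" where
  "arrival_density q = (if 0 < delay (fst q)
     then erlang_density (2 * lam - 1) (2 * real lam / delay (fst q)) (snd q) else 0)"

definition sensor_arrival_law :: "((real \<times> real) \<times> real) measure" where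
  "sensor_arrival_law = density (sensor_law \<Otimes>\<^sub>M lborel) arrival_density"

lemma sets_sensor_lborel: "sets (sensor_law \<Otimes>\<^sub>M lborel) = sets (borel :: ((real \<times> real) \<times> real) measure)"
proof -
  have "sets (sensor_law \<Otimes>\<^sub>M lborel) = sets (borel \<Otimes>\<^sub>M borel)"
    by (intro sets_pair_measure_cong) (simp_all add: sets_sensor_law)
  then show ?thesis unfolding borel_prod .
qed

lemma arrival_density_measurable[measurable]:
  "arrival_density \<in> borel_measurable (sensor_law \<Otimes>\<^sub>M lborel)"
  unfolding arrival_density_def erlang_density_def by measurable

lemma arrival_density_nonneg: "0 \<le> arrival_density q"
  unfolding arrival_density_def by (auto intro!: erlang_density_nonneg)

lemma arrival_density_support: "t < 0 \<Longrightarrow> arrival_density (p, t) = 0"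
  by (simp add: arrival_density_def erlang_density_def)

lemma has_bochner_integral_arrival_mean:
  assumes "0 < delay p"
  shows "has_bochner_integral lborel (\<lambda>t. arrival_density (p, t) * t) (delay p)"
proof -
  have "real (Suc (2 * lam - 1)) / (2 * real lam / delay p) = delay p"
    using lam_pos assms by (simp add: of_nat_diff)
  then show ?thesis
    using has_bochner_integral_erlang_mean[of "2 * real lam / delay p" "2 * lam - 1"] assms lam_pos
    by (simp add: arrival_density_def)
qed

lemma emeasure_sensor_arrival_law_Times:
  assumes a[measurable]: "a \<in> sets (borel :: (real \<times> real) measure)"
    and b[measurable]: "b \<in> sets (borel :: real measure)"
  shows "emeasure sensor_arrival_law (a \<times> b)
    = (\<integral>\<^sup>+ p. indicator a p * emeasure (density lborel (erlang_density (2 * lam - 1)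
         (2 * real lam / delay p))) b \<partial>sensor_law)"
proof -
  interpret L: prob_space sensor_law by (rule prob_space_sensor_law)
  interpret L: pair_sigma_finite sensor_law lborel ..
  have ab: "a \<times> b \<in> sets (sensor_law \<Otimes>\<^sub>M lborel)"
    using pair_measureI[OF a b] unfolding sets_sensor_lborel borel_prod .
  have "emeasure sensor_arrival_law (a \<times> b)
      = (\<integral>\<^sup>+ q. ennreal (arrival_density q) * indicator (a \<times> b) q \<partial>(sensor_law \<Otimes>\<^sub>M lborel))"
    unfolding sensor_arrival_law_def by (rule emeasure_density[OF _ ab]) measurable
  also have "\<dots> = (\<integral>\<^sup>+ p. \<integral>\<^sup>+ t. ennreal (arrival_density (p, t)) * indicator (a \<times> b) (p, t) \<partial>lborel \<partial>sensor_law)"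
    using ab by (intro lborel.nn_integral_fst[symmetric]) measurable
  also have "\<dots> = (\<integral>\<^sup>+ p. indicator a p * emeasure (density lborel (erlang_density (2 * lam - 1)
         (2 * real lam / delay p))) b \<partial>sensor_law)"
    using AE_sensor_law_delay_pos
  proof (intro nn_integral_cong_AE, eventually_elim)
    case (elim p)
    let ?f = "erlang_density (2 * lam - 1) (2 * real lam / delay p)"
    have "(\<integral>\<^sup>+ t. ennreal (arrival_density (p, t)) * indicator (a \<times> b) (p, t) \<partial>lborel)
        = (\<integral>\<^sup>+ t. indicator a p * (ennreal (?f t) * indicator b t) \<partial>lborel)"
      using elim by (intro nn_integral_cong) (auto simp: arrival_density_def split: split_indicator)
    also have "\<dots> = indicator a p * (\<integral>\<^sup>+ t. ennreal (?f t) * indicator b t \<partial>lborel)"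
      by (rule nn_integral_cmult) (auto simp: erlang_density_def)
    also have "\<dots> = indicator a p * emeasure (density lborel ?f) b"
      by (subst emeasure_density) (auto simp: erlang_density_def)
    finally show ?case .
  qed
  finally show ?thesis .
qed

lemma distr_sensor_arrival:
  "distr M borel (\<lambda>\<omega>. ((xs j \<omega>, ys j \<omega>), T j \<omega> - t_o)) = sensor_arrival_law"
proof -
  let ?E = "{a \<times> b | a b. a \<in> sets (borel :: (real \<times> real) measure) \<and> b \<in> sets (borel :: real measure)}"
  have sets_E: "sets (borel :: ((real \<times> real) \<times> real) measure) = sigma_sets UNIV ?E"
    using sets_pair_measure[of "borel :: (real \<times> real) measure" "borel :: real measure"]
    unfolding borel_prod by simp
  show ?thesis
  proof (rule measure_eqI_generator_eq[where E="?E" and \<Omega>=UNIV and A="\<lambda>_. UNIV"])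
    show "Int_stable ?E" by (rule Int_stable_pair_measure_generator)
    show "sets (distr M borel (\<lambda>\<omega>. ((xs j \<omega>, ys j \<omega>), T j \<omega> - t_o))) = sigma_sets UNIV ?E"
      using sets_E by simp
    show "sets sensor_arrival_law = sigma_sets UNIV ?E"
      using sets_E sets_sensor_lborel by (simp add: sensor_arrival_law_def)
    show "range (\<lambda>_. UNIV) \<subseteq> ?E" by (auto intro!: exI[of _ UNIV])
    show "emeasure (distr M borel (\<lambda>\<omega>. ((xs j \<omega>, ys j \<omega>), T j \<omega> - t_o))) UNIV \<noteq> \<infinity>"
      by (subst emeasure_distr) (auto simp: emeasure_space_1[simplified])
    fix X assume "X \<in> ?E"
    then obtain a b where X: "X = a \<times> b" and a[measurable]: "a \<in> sets (borel :: (real \<times> real) measure)"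
        and b[measurable]: "b \<in> sets (borel :: real measure)" by auto
    have [measurable]: "a \<times> b \<in> sets (borel :: ((real \<times> real) \<times> real) measure)"
      using pair_measureI[OF a b] unfolding borel_prod .
    have "emeasure (distr M borel (\<lambda>\<omega>. ((xs j \<omega>, ys j \<omega>), T j \<omega> - t_o))) X
        = emeasure M {\<omega> \<in> space M. (xs j \<omega>, ys j \<omega>) \<in> a \<and> T j \<omega> - t_o \<in> b}"
      unfolding X by (subst emeasure_distr) (auto intro!: arg_cong2[where f=emeasure])
    also have "\<dots> = emeasure sensor_arrival_law X"
      using cond_law[OF a b] by (simp add: X emeasure_sensor_arrival_law_Times sensor_law_def ident[of j] delay_def)
    finally show "emeasure (distr M borel (\<lambda>\<omega>. ((xs j \<omega>, ys j \<omega>), T j \<omega> - t_o))) X = emeasure sensor_arrival_law X" .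
  qed auto
qed

lemma integral_sensor_arrival_law:
  fixes h :: "real \<times> real \<Rightarrow> real"
  assumes h: "h \<in> borel_measurable borel" and int: "integrable sensor_law (\<lambda>p. h p * delay p)"
  shows "integrable sensor_arrival_law (\<lambda>q. h (fst q) * snd q)"
    and "(\<integral>q. h (fst q) * snd q \<partial>sensor_arrival_law) = (\<integral>p. h p * delay p \<partial>sensor_law)"
proof -
  have "sigma_finite_measure sensor_law"
    using prob_space_sensor_law by (rule prob_space_imp_sigma_finite)
  moreover have "h \<in> borel_measurable sensor_law"
    using h by (simp add: measurable_cong_sets[OF sets_sensor_law refl])
  moreover have "AE p in sensor_law. has_bochner_integral lborel (\<lambda>t. arrival_density (p, t) * t) (delay p)"
    using AE_sensor_law_delay_pos by eventually_elim (rule has_bochner_integral_arrival_mean)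
  ultimately show "integrable sensor_arrival_law (\<lambda>q. h (fst q) * snd q)"
    and "(\<integral>q. h (fst q) * snd q \<partial>sensor_arrival_law) = (\<integral>p. h p * delay p \<partial>sensor_law)"
    using integral_density_pair_fst_mult_snd[OF _ arrival_density_measurable arrival_density_nonneg
        arrival_density_support _ _ int]
    unfolding sensor_arrival_law_def by blast+
qed

definition gram :: "real^3^3" where
  "gram = (\<chi> i k. \<integral>p. regressor i p * regressor k p \<partial>sensor_law)"

lemma integrable_regressor_mult: "integrable sensor_law (\<lambda>p. regressor i p * regressor k p)"
proof (rule Bochner_Integration.integrable_bound)
  have [measurable]: "(\<lambda>p::real \<times> real. (fst p)^2 + (snd p)^2 + 1) \<in> borel_measurable borel"
    by (intro borel_measurable_continuous_onI continuous_intros)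
  have "integrable M (\<lambda>\<omega>. (xs 0 \<omega>)^2 + (ys 0 \<omega>)^2 + 1)"
    using int_x2 int_y2 by auto
  then show "integrable sensor_law (\<lambda>p. (fst p)^2 + (snd p)^2 + 1)"
    by (simp add: integral_sensor_law)
  show "AE p in sensor_law. norm (regressor i p * regressor k p) \<le> norm ((fst p)^2 + (snd p)^2 + 1)"
    using abs_regressor_mult_le[of i _ k] by (auto intro: order_trans[OF _ abs_ge_self])
qed (simp add: measurable_cong_sets[OF sets_sensor_law refl])

lemma delay_eq_regressors: "delay p = (\<Sum>k\<in>UNIV. regressor k p * X1_star s \<theta> xo yo $ k)"
  using t_star_eq_regressors[of s] s_pos by (simp add: delay_def)

lemma integrable_regressor_delay: "integrable sensor_law (\<lambda>p. regressor i p * delay p)"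
proof -
  have "integrable sensor_law (\<lambda>p. \<Sum>k\<in>UNIV. X1_star s \<theta> xo yo $ k * (regressor i p * regressor k p))"
    using integrable_regressor_mult by auto
  then show ?thesis by (simp add: delay_eq_regressors sum_distrib_left mult_ac)
qed

lemma integral_regressor_delay:
  "(\<integral>p. regressor i p * delay p \<partial>sensor_law) = (gram *v X1_star s \<theta> xo yo) $ i"
proof -
  have "(\<integral>p. regressor i p * delay p \<partial>sensor_law)
      = (\<integral>p. (\<Sum>k\<in>UNIV. X1_star s \<theta> xo yo $ k * (regressor i p * regressor k p)) \<partial>sensor_law)"
    by (simp add: delay_eq_regressors sum_distrib_left mult_ac)
  also have "\<dots> = (\<Sum>k\<in>UNIV. X1_star s \<theta> xo yo $ k * (\<integral>p. regressor i p * regressor k p \<partial>sensor_law))"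
    using integrable_regressor_mult by (simp add: Bochner_Integration.integral_sum)
  finally show ?thesis by (simp add: gram_def matrix_vector_mult_def mult_ac)
qed

lemma invertible_gram: "invertible gram"
proof -
  have moment: "gram $ i $ k = (\<integral>\<omega>. regressor i (xs 0 \<omega>, ys 0 \<omega>) * regressor k (xs 0 \<omega>, ys 0 \<omega>) \<partial>M)" for i k
    by (simp add: gram_def integral_sensor_law)
  have "gram $ 1 $ 3 = 0" "gram $ 3 $ 1 = 0" "gram $ 2 $ 3 = 0" "gram $ 3 $ 2 = 0" "gram $ 3 $ 3 = 1"
    using mean_x mean_y by (simp_all add: moment prob_space)
  moreover have "covar M (xs 0) (xs 0) = gram $ 1 $ 1" "covar M (xs 0) (ys 0) = gram $ 1 $ 2"
    "covar M (ys 0) (xs 0) = gram $ 2 $ 1" "covar M (ys 0) (ys 0) = gram $ 2 $ 2"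
    by (simp_all add: covar_def mean_x mean_y moment)
  ultimately have "det gram = covar M (xs 0) (xs 0) * covar M (ys 0) (ys 0) - covar M (xs 0) (ys 0) * covar M (ys 0) (xs 0)"
    by (simp add: det_3)
  then have "det gram \<noteq> 0" using nonsing by (simp add: det_2)
  then show ?thesis by (simp add: invertible_det_nz)
qed

lemma indep_vars_comp_sensor_data:
  assumes "f \<in> borel_measurable borel"
  shows "indep_vars (\<lambda>_. borel) (\<lambda>j \<omega>. f (xs j \<omega>, ys j \<omega>, T j \<omega>)) UNIV"
  using indep_vars_compose2[OF indep, of "\<lambda>_. f" "\<lambda>_. borel"] assms by simp

lemma tendsto_in_prob_A1TA1:
  "tendsto_in_prob M (\<lambda>n \<omega>. A1TA1 (\<lambda>j. xs j \<omega>) (\<lambda>j. ys j \<omega>) n $ i $ k / real n) (gram $ i $ k)"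
proof -
  have "indep_vars (\<lambda>_. borel) (\<lambda>j \<omega>. (xs j \<omega>, ys j \<omega>)) UNIV"
    using indep_vars_comp_sensor_data[of "\<lambda>z. (fst z, fst (snd z))"]
    by (simp add: borel_measurable_continuous_onI continuous_intros)
  then show ?thesis
    using weak_law_of_large_numbers_distr[of borel _ sensor_law "\<lambda>p. regressor i p * regressor k p"]
      integrable_regressor_mult ident
    by (simp add: sensor_law_def A1TA1_def A1_row_nth gram_def)
qed

lemma tendsto_in_prob_A1TY1:
  "tendsto_in_prob M (\<lambda>n \<omega>. A1TY1 (\<lambda>j. xs j \<omega>) (\<lambda>j. ys j \<omega>) (\<lambda>j. T j \<omega> - t_o) n $ i / real n)
     ((gram *v X1_star s \<theta> xo yo) $ i)"
proof -
  have "indep_vars (\<lambda>_. borel) (\<lambda>j \<omega>. ((xs j \<omega>, ys j \<omega>), T j \<omega> - t_o)) UNIV"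
    using indep_vars_comp_sensor_data[of "\<lambda>z. ((fst z, fst (snd z)), snd (snd z) - t_o)"]
    by (simp add: borel_measurable_continuous_onI continuous_intros)
  moreover have "(\<lambda>q. regressor i (fst q) * snd q) \<in> borel_measurable borel"
    using regressor_cases[of i]
    by (auto intro!: borel_measurable_continuous_onI continuous_intros)
  ultimately have "tendsto_in_prob M
      (\<lambda>n \<omega>. (\<Sum>j<n. (\<lambda>q. regressor i (fst q) * snd q) ((xs j \<omega>, ys j \<omega>), T j \<omega> - t_o)) / real n)
      (\<integral>q. regressor i (fst q) * snd q \<partial>sensor_arrival_law)"
    using integral_sensor_arrival_law(1)[OF regressor_measurable integrable_regressor_delay]
    by (rule weak_law_of_large_numbers_distr[OF _ distr_sensor_arrival])
  then show ?thesis
    using integral_sensor_arrival_law(2)[OF regressor_measurable integrable_regressor_delay]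
    by (simp add: A1TY1_def A1_row_nth integral_regressor_delay)
qed

end

theorem lemma1:
  fixes M :: "'a measure"
    and xs ys T :: "nat \<Rightarrow> 'a \<Rightarrow> real"
    and t_o s \<theta> xo yo :: real
    and lam :: nat
  assumes prob: "prob_space M"
    and s_pos: "s > 0"
    and lam_pos: "lam \<ge> 1"
    and meas_x: "\<And>j. xs j \<in> borel_measurable M"
    and meas_y: "\<And>j. ys j \<in> borel_measurable M"
    and meas_T: "\<And>j. T j \<in> borel_measurable M"
    and indep: "prob_space.indep_vars M (\<lambda>_. borel) (\<lambda>j \<omega>. (xs j \<omega>, ys j \<omega>, T j \<omega>)) UNIV"
    and ident: "\<And>j. distr M borel (\<lambda>\<omega>. (xs j \<omega>, ys j \<omega>)) = distr M borel (\<lambda>\<omega>. (xs 0 \<omega>, ys 0 \<omega>))"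
    and int_x2: "integrable M (\<lambda>\<omega>. (xs 0 \<omega>)\<^sup>2)"
    and int_y2: "integrable M (\<lambda>\<omega>. (ys 0 \<omega>)\<^sup>2)"
    and mean_x: "(\<integral>\<omega>. xs 0 \<omega> \<partial>M) = 0"
    and mean_y: "(\<integral>\<omega>. ys 0 \<omega> \<partial>M) = 0"
    and nonsing: "det (vector [vector [covar M (xs 0) (xs 0), covar M (xs 0) (ys 0)],
                               vector [covar M (ys 0) (xs 0), covar M (ys 0) (ys 0)]] :: real^2^2) \<noteq> 0"
    and after: "\<And>j. AE \<omega> in M. t_star t_o s \<theta> xo yo (xs j \<omega>) (ys j \<omega>) > t_o"
    and cond_law: "\<And>j A B. A \<in> sets (borel :: (real \<times> real) measure) \<Longrightarrow> B \<in> sets (borel :: real measure) \<Longrightarrow>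
        emeasure M {\<omega> \<in> space M. (xs j \<omega>, ys j \<omega>) \<in> A \<and> T j \<omega> - t_o \<in> B}
        = (\<integral>\<^sup>+ p. indicator A p *
              emeasure (density lborel (erlang_density (2 * lam - 1)
                 (2 * real lam / (t_star t_o s \<theta> xo yo (fst p) (snd p) - t_o)))) B
            \<partial>(distr M borel (\<lambda>\<omega>. (xs j \<omega>, ys j \<omega>))))"
  shows "tendsto_in_prob M
           (\<lambda>n \<omega>. X1_star s \<theta> xo yo - LS_X1 (\<lambda>j. xs j \<omega>) (\<lambda>j. ys j \<omega>) (\<lambda>j. T j \<omega> - t_o) n) 0"
proof -
  interpret sensor_model M xs ys T t_o s \<theta> xo yo lam
    by (rule sensor_model.intro) fact+
  show ?thesis
    unfolding LS_X1_def
  proof (rule tendsto_in_prob_matrix_inv_mult[OF invertible_gram])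
    show "(\<lambda>\<omega>. A1TA1 (\<lambda>j. xs j \<omega>) (\<lambda>j. ys j \<omega>) n $ i $ k) \<in> borel_measurable M"
      and "(\<lambda>\<omega>. A1TY1 (\<lambda>j. xs j \<omega>) (\<lambda>j. ys j \<omega>) (\<lambda>j. T j \<omega> - t_o) n $ i) \<in> borel_measurable M"
      for n i k
      unfolding A1TA1_def A1TY1_def A1_row_nth vec_lambda_beta by measurable
  qed (fact tendsto_in_prob_A1TA1 tendsto_in_prob_A1TY1)+
qed

end
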